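(* Let $\ell$ and $m$ be positive integers with $\ell\le m$, let $G$ be a torsion-free group written additively (not necessarily abelian), let $\mathbf{a}=(a_1,\dots,a_m)$ be a sequence of elements of $G$, and let $A$ be the set of distinct terms of $\mathbf{a}$. Then \[ |\Sigma^{\ell}(\mathbf{a})|\ \ge\ \sum_{a\in A}\mu_{\mathbf{a}}(a)-\ell+1 . \]
   Context: $\Sigma^{\ell}(\mathbf{a})$ is the set of all elements $a_{i_1}+\cdots+a_{i_\ell}$ with $i_1,\dots,i_\ell\in[1,m]$ pairwise distinct indices, taken in any order (the sums of $\ell$ terms of $\mathbf{a}$). For $a\in G$, $\rho_a(\mathbf{a})=|\{i\in[1,m]:a_i=a\}|$ and $\mu_{\mathbf{a}}(a)=\min(\ell,\rho_a(\mathbf{a}))$. *)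

theory Defs
  imports Main
begin

definition torsion_free_group :: "'a::group_add itself \<Rightarrow> bool" where
  "torsion_free_group _ \<longleftrightarrow>
     (\<forall>(x::'a) (n::nat). 0 < n \<longrightarrow> sum_list (replicate n x) = 0 \<longrightarrow> x = 0)"

definition sigma_ell :: "nat \<Rightarrow> nat \<Rightarrow> (nat \<Rightarrow> 'a::group_add) \<Rightarrow> 'a set" where
  "sigma_ell l m a =
     {sum_list (map a is) | is. length is = l \<and> distinct is \<and> set is \<subseteq> {1..m}}"

definition rho :: "nat \<Rightarrow> (nat \<Rightarrow> 'a) \<Rightarrow> 'a \<Rightarrow> nat" where
  "rho m a x = card {i \<in> {1..m}. a i = x}"

definition mu :: "nat \<Rightarrow> nat \<Rightarrow> (nat \<Rightarrow> 'a) \<Rightarrow> 'a \<Rightarrow> nat" where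
  "mu l m a x = min l (rho m a x)"

end

theory Submission
  imports Defs "HOL-Library.Set_Algebras" "HOL-Library.Product_Lexorder"
begin

text \<open>
  The core is Kemperman's inequality \<open>|A + B| \<ge> |A| + |B| - 1\<close> for finite nonempty
  subsets of a torsion-free group. If \<open>|B| \<le> |A|\<close> and \<open>B\<close> has two elements \<open>b\<^sub>1 \<noteq> b\<^sub>2\<close>,
  put \<open>e = b\<^sub>2 - b\<^sub>1\<close> and compare \<open>(A \<union> (A + e), B \<inter> (-e + B))\<close> with
  \<open>(A \<inter> (A + e), B \<union> (-e + B))\<close>: both sumsets lie in \<open>A + B\<close>, the four sizes add up
  to \<open>2(|A| + |B|)\<close>, and torsion-freeness makes \<open>B \<union> (-e + B)\<close> strictly larger than \<open>B\<close>.
  Hence one of the pairs increases \<open>|A| + |B|\<close>, or keeps it and shrinks the smaller set,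
  which drives an induction. Iterating gives \<open>|B\<^sub>1 + \<dots> + B\<^sub>k| \<ge> \<Sum>|B\<^sub>j| - k + 1\<close>.

  For the theorem, colour the indices so that the \<open>l\<close> colour classes are nonempty,
  carry pairwise distinct values, and together contain exactly \<open>\<mu>(x)\<close> indices of each
  value \<open>x\<close>. Picking one index from each class gives distinct indices, so the sumset
  of the value sets of the classes lies in \<open>\<Sigma>\<^sup>l(a)\<close>.
\<close>

lemma inj_sum_list_replicate:
  assumes "torsion_free_group TYPE('a::group_add)" and "(e::'a) \<noteq> 0"
  shows "inj (\<lambda>n. sum_list (replicate n e))"
proof (rule linorder_injI)
  fix i j :: nat
  assume "i < j"
  then obtain d where d: "j = i + d" "0 < d"
    using less_imp_add_positive by blast
  have "sum_list (replicate d e) \<noteq> 0"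
    using assms d(2) unfolding torsion_free_group_def by blast
  then show "sum_list (replicate i e) \<noteq> sum_list (replicate j e)"
    unfolding d(1) replicate_add sum_list_append by (metis add.right_neutral add_left_cancel)
qed

lemma left_translate_not_subset:
  fixes B :: "'a::group_add set"
  assumes "torsion_free_group TYPE('a)" and "e \<noteq> 0" and "finite B" and "B \<noteq> {}"
  shows "\<not> (+) e ` B \<subseteq> B"
proof
  assume closed: "(+) e ` B \<subseteq> B"
  obtain y where "y \<in> B"
    using assms(4) by blast
  then have "sum_list (replicate n e) + y \<in> B" for n
    by (induction n) (use closed in \<open>auto simp: add.assoc\<close>)
  moreover have "inj (\<lambda>n. sum_list (replicate n e) + y)"
    using inj_sum_list_replicate[OF assms(1,2)] by (simp add: inj_def)
  ultimately have "infinite B"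
    by (auto simp: infinite_iff_countable_subset)
  with assms(3) show False
    by contradiction
qed

lemma set_plus_translate_subset:
  fixes A B :: "'a::group_add set"
  shows "(A \<union> (\<lambda>x. x + e) ` A) + (B \<inter> (+) (- e) ` B) \<subseteq> A + B"
    and "(A \<inter> (\<lambda>x. x + e) ` A) + (B \<union> (+) (- e) ` B) \<subseteq> A + B"
  by (fastforce simp: set_plus_def add.assoc)+

lemma card_Un_Int_image:
  assumes "finite A" and "inj_on f A"
  shows "card (A \<union> f ` A) + card (A \<inter> f ` A) = 2 * card A"
  using card_Un_Int[of A "f ` A"] assms by (simp add: card_image)

lemma uminus_set_plus:
  fixes A B :: "'a::group_add set"
  shows "uminus ` (A + B) = uminus ` B + uminus ` A"
  by (force simp: set_plus_def minus_add image_iff)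

lemma exists_set_plus_transform_le:
  fixes A B :: "'a::group_add set"
  assumes tf: "torsion_free_group TYPE('a)" and fin: "finite A" "finite B"
    and le: "card B \<le> card A" and two: "2 \<le> card B"
  obtains A' B' where "finite A'" "finite B'" "A' \<noteq> {}" "B' \<noteq> {}" "A' + B' \<subseteq> A + B"
    and "card A + card B \<le> card A' + card B'"
    and "card A' + card B' = card A + card B \<Longrightarrow> min (card A') (card B') < card B"
proof -
  obtain b1 b2 where b: "b1 \<in> B" "b2 \<in> B" "b1 \<noteq> b2"
    using two by (auto simp: numeral_2_eq_2 card_le_Suc_iff)
  define e where "e = b2 + - b1"
  define Ae where "Ae = (\<lambda>x. x + e) ` A"
  define eB where "eB = (+) (- e) ` B"
  have "e \<noteq> 0"
    using b(3) by (simp add: e_def)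
  have "b1 \<in> B \<inter> eB"
    using b by (force simp: eB_def e_def add.assoc)
  have "\<not> eB \<subseteq> B"
    unfolding eB_def using left_translate_not_subset[OF tf _ fin(2), of "- e"] \<open>e \<noteq> 0\<close> b by auto
  then have "card B < card (B \<union> eB)"
    using fin(2) by (intro psubset_card_mono) (auto simp: eB_def)
  have "card A \<le> card (A \<union> Ae)"
    using fin(1) by (intro card_mono) (auto simp: Ae_def)
  have cardA: "card (A \<union> Ae) + card (A \<inter> Ae) = 2 * card A"
    unfolding Ae_def by (rule card_Un_Int_image[OF fin(1)]) simp
  have cardB: "card (B \<union> eB) + card (B \<inter> eB) = 2 * card B"
    unfolding eB_def by (rule card_Un_Int_image[OF fin(2)]) simp
  have fin': "finite (A \<union> Ae)" "finite (A \<inter> Ae)" "finite (B \<union> eB)" "finite (B \<inter> eB)"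
    using fin by (auto simp: Ae_def eB_def)
  have "1 \<le> card (B \<inter> eB)"
    using fin'(4) \<open>b1 \<in> B \<inter> eB\<close> by (metis Suc_le_eq card_gt_0_iff empty_iff One_nat_def)
  show ?thesis
  proof (cases "card (B \<union> eB) - card B \<le> card (A \<union> Ae) - card A")
    case True
    show ?thesis
    proof (rule that[OF fin'(1,4)])
      show "A \<union> Ae \<noteq> {}" "B \<inter> eB \<noteq> {}"
        using \<open>b1 \<in> B \<inter> eB\<close> two le by auto
      show "(A \<union> Ae) + (B \<inter> eB) \<subseteq> A + B"
        unfolding Ae_def eB_def by (rule set_plus_translate_subset)
    qed (use True cardA cardB \<open>card B < card (B \<union> eB)\<close> \<open>card A \<le> card (A \<union> Ae)\<close> in linarith)+
  next
    case False
    show ?thesis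
    proof (rule that[OF fin'(2,3)])
      show "A \<inter> Ae \<noteq> {}"
        using False cardA cardB le \<open>1 \<le> card (B \<inter> eB)\<close> \<open>card A \<le> card (A \<union> Ae)\<close> by fastforce
      show "B \<union> eB \<noteq> {}"
        using b by auto
      show "(A \<inter> Ae) + (B \<union> eB) \<subseteq> A + B"
        unfolding Ae_def eB_def by (rule set_plus_translate_subset)
    qed (use False cardA cardB \<open>card A \<le> card (A \<union> Ae)\<close> in linarith)+
  qed
qed

lemma card_le_card_set_plus:
  fixes A B :: "'a::group_add set"
  assumes "finite A" and "finite B"
  shows "B \<noteq> {} \<Longrightarrow> card A \<le> card (A + B)"
    and "A \<noteq> {} \<Longrightarrow> card B \<le> card (A + B)"
proof -
  assume "B \<noteq> {}"
  then obtain b where "b \<in> B"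
    by blast
  have "card A = card ((\<lambda>x. x + b) ` A)"
    by (simp add: card_image)
  also have "\<dots> \<le> card (A + B)"
    using \<open>b \<in> B\<close> by (intro card_mono finite_set_plus assms) auto
  finally show "card A \<le> card (A + B)" .
next
  assume "A \<noteq> {}"
  then obtain a where "a \<in> A"
    by blast
  have "card B = card ((+) a ` B)"
    by (simp add: card_image)
  also have "\<dots> \<le> card (A + B)"
    using \<open>a \<in> A\<close> by (intro card_mono finite_set_plus assms) auto
  finally show "card B \<le> card (A + B)" .
qed

lemma exists_set_plus_transform:
  fixes A B :: "'a::group_add set"
  assumes tf: "torsion_free_group TYPE('a)" and fin: "finite A" "finite B"
    and two: "2 \<le> card A" "2 \<le> card B"
  obtains A' B' where "finite A'" "finite B'" "A' \<noteq> {}" "B' \<noteq> {}" "A' + B' \<subseteq> A + B"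
    and "card A + card B \<le> card A' + card B'"
    and "card A' + card B' = card A + card B \<Longrightarrow> min (card A') (card B') < min (card A) (card B)"
proof (cases "card B \<le> card A")
  case True
  then show ?thesis
    using exists_set_plus_transform_le[OF tf fin True two(2)] that by (metis min.absorb2)
next
  case False
  txt \<open>Negation reverses sums, so the mirrored pair falls under the first case.\<close>
  have card_uminus: "card (uminus ` S) = card S" for S :: "'a set"
    by (simp add: card_image)
  obtain B'' A'' where "finite B''" "finite A''" "B'' \<noteq> {}" "A'' \<noteq> {}"
    and sub: "B'' + A'' \<subseteq> uminus ` B + uminus ` A"
    and "card B + card A \<le> card B'' + card A''"
    and "card B'' + card A'' = card B + card A \<Longrightarrow> min (card B'') (card A'') < card A"
    using exists_set_plus_transform_le[of "uminus ` B" "uminus ` A"] tf fin two False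
    by (auto simp: card_uminus)
  moreover have "uminus ` A'' + uminus ` B'' \<subseteq> A + B"
    using image_mono[OF sub, of uminus] by (simp add: uminus_set_plus[symmetric] image_image)
  ultimately show ?thesis
    using that[of "uminus ` A''" "uminus ` B''"] False
    by (auto simp: card_uminus add.commute min.commute)
qed

lemma card_set_plus_ge:
  fixes A B :: "'a::group_add set"
  assumes tf: "torsion_free_group TYPE('a)"
    and "finite A" "finite B" "A \<noteq> {}" "B \<noteq> {}"
  shows "card A + card B \<le> card (A + B) + 1"
  using assms(2-)
proof (induction "(2 * card (A + B) - (card A + card B), min (card A) (card B))"
    arbitrary: A B rule: less_induct)
  case less
  have "card A \<le> card (A + B)" "card B \<le> card (A + B)"
    using card_le_card_set_plus[OF less.prems(1,2)] less.prems(3,4) by blast+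
  moreover have "card A \<noteq> 0" "card B \<noteq> 0"
    using less.prems by simp_all
  ultimately consider "card A = 1 \<or> card B = 1" | "2 \<le> card A" "2 \<le> card B"
    by linarith
  then show ?case
  proof cases
    case 1
    with \<open>card A \<le> card (A + B)\<close> \<open>card B \<le> card (A + B)\<close> show ?thesis
      by linarith
  next
    case 2
    then obtain A' B' where A'B': "finite A'" "finite B'" "A' \<noteq> {}" "B' \<noteq> {}"
      and sub: "A' + B' \<subseteq> A + B"
      and le: "card A + card B \<le> card A' + card B'"
      and eq: "card A' + card B' = card A + card B \<Longrightarrow> min (card A') (card B') < min (card A) (card B)"
      using exists_set_plus_transform[OF tf less.prems(1,2)] by blast
    have "card (A' + B') \<le> card (A + B)"
      using sub by (intro card_mono finite_set_plus less.prems)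
    moreover have "card A' \<le> card (A' + B')" "card B' \<le> card (A' + B')"
      using A'B' by (auto intro: card_le_card_set_plus)
    ultimately have "(2 * card (A' + B') - (card A' + card B'), min (card A') (card B'))
        < (2 * card (A + B) - (card A + card B), min (card A) (card B))"
      using le eq by (cases "card A' + card B' = card A + card B") auto
    then have "card A' + card B' \<le> card (A' + B') + 1"
      using less.hyps A'B' by blast
    with le \<open>card (A' + B') \<le> card (A + B)\<close> show ?thesis
      by linarith
  qed
qed

lemma finite_sum_list_sets:
  "\<forall>B\<in>set Bs. finite B \<Longrightarrow> finite (sum_list Bs :: 'a::monoid_add set)"
  by (induction Bs) (simp_all add: finite_set_plus)

lemma sum_list_sets_nonempty:
  "\<forall>B\<in>set Bs. B \<noteq> {} \<Longrightarrow> (sum_list Bs :: 'a::monoid_add set) \<noteq> {}"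
  by (induction Bs) (auto simp: set_plus_def)

lemma card_sum_list_sets_ge:
  fixes Bs :: "'a::group_add set list"
  assumes tf: "torsion_free_group TYPE('a)" and "\<forall>B\<in>set Bs. finite B \<and> B \<noteq> {}"
  shows "sum_list (map card Bs) + 1 \<le> card (sum_list Bs) + length Bs"
  using assms(2)
proof (induction Bs)
  case (Cons B Bs)
  have "card B + card (sum_list Bs) \<le> card (B + sum_list Bs) + 1"
    using Cons.prems finite_sum_list_sets sum_list_sets_nonempty
    by (intro card_set_plus_ge[OF tf]) auto
  with Cons show ?case
    by simp
qed simp

lemma sum_list_image_sets:
  "sum_list (map (\<lambda>A. f ` A) As) = (\<lambda>is. sum_list (map f is)) ` {is. list_all2 (\<in>) is As}"
proof (induction As)
  case (Cons A As)
  show ?case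
    unfolding list.map sum_list.Cons Cons.IH
    by (auto simp: set_plus_def list_all2_Cons2 image_iff) (metis list.map(2) sum_list.Cons)+
qed simp

lemma finite_sigma_ell: "finite (sigma_ell l m a)"
proof -
  have "sigma_ell l m a \<subseteq> (\<lambda>is. sum_list (map a is)) ` {is. set is \<subseteq> {1..m} \<and> length is = l}"
    unfolding sigma_ell_def by blast
  then show ?thesis
    by (rule finite_subset) (simp add: finite_lists_length_eq)
qed

lemma sum_list_colour_classes_subset_sigma_ell:
  "sum_list (map (\<lambda>j. a ` {i\<in>{1..m}. c i = j}) [0..<l]) \<subseteq> sigma_ell l m a"
proof
  fix z
  assume "z \<in> sum_list (map (\<lambda>j. a ` {i\<in>{1..m}. c i = j}) [0..<l])"
  also have "map (\<lambda>j. a ` {i\<in>{1..m}. c i = j}) [0..<l]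
      = map ((`) a) (map (\<lambda>j. {i\<in>{1..m}. c i = j}) [0..<l])"
    by simp
  finally obtain "is" where z: "z = sum_list (map a is)"
    and "list_all2 (\<in>) is (map (\<lambda>j. {i\<in>{1..m}. c i = j}) [0..<l])"
    unfolding sum_list_image_sets by blast
  then have len: "length is = l" and colour: "\<And>t. t < l \<Longrightarrow> is ! t \<in> {1..m} \<and> c (is ! t) = t"
    by (auto simp: list_all2_conv_all_nth)
  have "distinct is"
    unfolding distinct_conv_nth using len colour by metis
  moreover have "set is \<subseteq> {1..m}"
    using len colour by (auto simp: in_set_conv_nth)
  ultimately show "z \<in> sigma_ell l m a"
    unfolding sigma_ell_def using z len by blast
qed

lemma card_eq_sum_card_fibres:
  assumes "finite S" and "finite T" and "f ` S \<subseteq> T"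
  shows "card S = (\<Sum>y\<in>T. card {x\<in>S. f x = y})"
  using sum.group[OF assms, of "\<lambda>_. 1 :: nat"] by simp

lemma card_Collect_atLeastAtMost_Suc:
  "card {i\<in>{1..Suc n}. P i} = card {i\<in>{1..n}. P i} + (if P (Suc n) then 1 else 0)"
proof -
  have "{i\<in>{1..Suc n}. P i}
      = (if P (Suc n) then insert (Suc n) {i\<in>{1..n}. P i} else {i\<in>{1..n}. P i})"
    by (auto simp: le_Suc_eq)
  then show ?thesis
    by simp
qed

text \<open>Indices of colour \<open>\<ge> l\<close> are discarded.\<close>

definition admissible_colouring :: "nat \<Rightarrow> nat \<Rightarrow> (nat \<Rightarrow> 'a) \<Rightarrow> (nat \<Rightarrow> nat) \<Rightarrow> bool" where
  "admissible_colouring l m a c \<longleftrightarrow>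
     {..<l} \<subseteq> c ` {1..m} \<and> (\<forall>j<l. inj_on a {i\<in>{1..m}. c i = j}) \<and>
     (\<forall>x. card {i\<in>{1..m}. c i < l \<and> a i = x} = mu l m a x)"

lemma admissible_colouring_base: "admissible_colouring l l a (\<lambda>i. i - 1)"
proof -
  have "{..<l} \<subseteq> (\<lambda>i. i - 1) ` {1..l}"
    by (auto simp: image_iff intro!: bexI[of _ "Suc _"])
  moreover have "inj_on a {i\<in>{1..l}. i - 1 = j}" for j
    by (auto simp: inj_on_def)
  moreover have "card {i\<in>{1..l}. i - 1 < l \<and> a i = x} = mu l l a x" for x
  proof -
    have "card {i\<in>{1..l}. a i = x} \<le> card {1..l}"
      by (rule card_mono) auto
    moreover have "{i\<in>{1..l}. i - 1 < l \<and> a i = x} = {i\<in>{1..l}. a i = x}"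
      by auto
    ultimately show ?thesis
      by (simp add: mu_def rho_def)
  qed
  ultimately show ?thesis
    unfolding admissible_colouring_def by blast
qed

lemma admissible_colouring_Suc:
  assumes adm: "admissible_colouring l n a c"
  obtains c' where "admissible_colouring l (Suc n) a c'"
proof -
  define x where "x = a (Suc n)"
  obtain j where j_less_iff: "j < l \<longleftrightarrow> rho n a x < l"
    and fresh: "j < l \<Longrightarrow> j \<notin> c ` {i\<in>{1..n}. a i = x}"
  proof (cases "rho n a x < l")
    case True
    have "card (c ` {i\<in>{1..n}. a i = x}) < card {..<l}"
      using True card_image_le[of "{i\<in>{1..n}. a i = x}" c] by (simp add: rho_def)
    moreover have "finite (c ` {i\<in>{1..n}. a i = x})"
      by simp
    ultimately have "\<not> {..<l} \<subseteq> c ` {i\<in>{1..n}. a i = x}"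
      by (meson card_mono not_le)
    then show ?thesis
      using that True by blast
  next
    case False
    then show ?thesis
      using that[of l] by simp
  qed
  define c' where "c' = c(Suc n := j)"
  have c'_eq: "c' i = c i" if "i \<in> {1..n}" for i
    using that by (simp add: c'_def)
  have "{..<l} \<subseteq> c' ` {1..Suc n}"
    using adm c'_eq unfolding admissible_colouring_def by force
  moreover have "inj_on a {i\<in>{1..Suc n}. c' i = k}" if "k < l" for k
  proof (cases "k = j")
    case True
    have "{i\<in>{1..Suc n}. c' i = k} = insert (Suc n) {i\<in>{1..n}. c i = k}"
      using True by (auto simp: c'_def le_Suc_eq)
    moreover have "a (Suc n) \<notin> a ` {i\<in>{1..n}. c i = k}"
      using fresh True that by (auto simp: x_def)
    ultimately show ?thesis
      using adm that unfolding admissible_colouring_def by simp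
  next
    case False
    have "{i\<in>{1..Suc n}. c' i = k} = {i\<in>{1..n}. c i = k}"
      using False by (auto simp: c'_def le_Suc_eq)
    then show ?thesis
      using adm that unfolding admissible_colouring_def by simp
  qed
  moreover have "card {i\<in>{1..Suc n}. c' i < l \<and> a i = y} = mu l (Suc n) a y" for y
  proof -
    have "{i\<in>{1..n}. c' i < l \<and> a i = y} = {i\<in>{1..n}. c i < l \<and> a i = y}"
      using c'_eq by auto
    then have "card {i\<in>{1..Suc n}. c' i < l \<and> a i = y}
        = card {i\<in>{1..n}. c i < l \<and> a i = y} + (if j < l \<and> x = y then 1 else 0)"
      unfolding card_Collect_atLeastAtMost_Suc by (simp add: c'_def x_def)
    moreover have "rho (Suc n) a y = rho n a y + (if x = y then 1 else 0)"
      unfolding rho_def card_Collect_atLeastAtMost_Suc x_def by simp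
    ultimately show ?thesis
      using adm j_less_iff unfolding admissible_colouring_def mu_def by auto
  qed
  ultimately show ?thesis
    using that unfolding admissible_colouring_def by blast
qed

lemma exists_admissible_colouring:
  assumes "l \<le> m"
  obtains c where "admissible_colouring l m a c"
  using assms
proof (induction m arbitrary: thesis rule: nat_induct_at_least)
  case base
  then show ?case
    using admissible_colouring_base by blast
next
  case (Suc n)
  then show ?case
    using admissible_colouring_Suc by metis
qed

lemma admissible_colouring_class_nonempty:
  assumes "admissible_colouring l m a c" and "j < l"
  shows "{i\<in>{1..m}. c i = j} \<noteq> {}"
proof -
  have "j \<in> c ` {1..m}"
    using assms by (auto simp: admissible_colouring_def)
  then show ?thesis
    by auto
qed

lemma admissible_colouring_sum_card:
  assumes adm: "admissible_colouring l m a c"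
  shows "(\<Sum>j<l. card (a ` {i\<in>{1..m}. c i = j})) = (\<Sum>x\<in>a ` {1..m}. mu l m a x)"
proof -
  let ?U = "{i\<in>{1..m}. c i < l}"
  have "(\<Sum>j<l. card (a ` {i\<in>{1..m}. c i = j})) = (\<Sum>j<l. card {i\<in>?U. c i = j})"
  proof (rule sum.cong)
    fix j
    assume "j \<in> {..<l}"
    then have "inj_on a {i\<in>{1..m}. c i = j}" and "{i\<in>?U. c i = j} = {i\<in>{1..m}. c i = j}"
      using adm by (auto simp: admissible_colouring_def)
    then show "card (a ` {i\<in>{1..m}. c i = j}) = card {i\<in>?U. c i = j}"
      by (simp add: card_image)
  qed simp
  also have "\<dots> = card ?U"
    by (rule card_eq_sum_card_fibres[symmetric]) auto
  also have "\<dots> = (\<Sum>x\<in>a ` {1..m}. card {i\<in>?U. a i = x})"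
    by (rule card_eq_sum_card_fibres) auto
  also have "\<dots> = (\<Sum>x\<in>a ` {1..m}. mu l m a x)"
    using adm by (intro sum.cong) (auto simp: admissible_colouring_def)
  finally show ?thesis .
qed

theorem theorem6p1:
  fixes l m :: nat and a :: "nat \<Rightarrow> 'a::group_add"
  assumes "0 < l" and "l \<le> m"
    and "torsion_free_group TYPE('a)"
  shows "int (card (sigma_ell l m a))
           \<ge> (\<Sum>x\<in>a ` {1..m}. int (mu l m a x)) - int l + 1"
proof -
  obtain c where adm: "admissible_colouring l m a c"
    using exists_admissible_colouring[OF assms(2)] .
  define Bs where "Bs = map (\<lambda>j. a ` {i\<in>{1..m}. c i = j}) [0..<l]"
  have "\<forall>B\<in>set Bs. finite B \<and> B \<noteq> {}"
    using admissible_colouring_class_nonempty[OF adm] by (simp add: Bs_def)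
  then have "sum_list (map card Bs) + 1 \<le> card (sum_list Bs) + length Bs"
    by (rule card_sum_list_sets_ge[OF assms(3)])
  moreover have "length Bs = l"
    by (simp add: Bs_def)
  moreover have "sum_list (map card Bs) = (\<Sum>x\<in>a ` {1..m}. mu l m a x)"
    using admissible_colouring_sum_card[OF adm]
    by (simp add: Bs_def sum_list_distinct_conv_sum_set atLeast0LessThan)
  moreover have "card (sum_list Bs) \<le> card (sigma_ell l m a)"
    unfolding Bs_def by (intro card_mono finite_sigma_ell sum_list_colour_classes_subset_sigma_ell)
  ultimately show ?thesis
    unfolding of_nat_sum[symmetric] by linarith
qed

end
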